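(* Let $g\sim\mathcal N(0,1)$ and, for nonnegative integers $a,b$, let $I(a,b)=\mathbb E[(g^2-1)^ag^{2b}]$. Then: (i) $I(0,0)=1$, $I(1,0)=0$ and $I(0,b)=(2b-1)!!$. Moreover $I(a,0)=2(a-1)\bigl(I(a-1,0)+I(a-2,0)\bigr)$ for $a\ge2$, and $I(a,b)=2a\,I(a-1,b)+(2b-1)\,I(a,b-1)$ for $a\ge1$, $b\ge1$. (ii) If either $b=0$ and $a\ge2$, or $b\ge1$ and $a\ge0$, then $\mathbb E[g^{2a+2b}]\le2^a\,\mathbb E[(g^2-1)^ag^{2b}]$. *)

theory Defs
  imports "HOL-Probability.Probability"
begin

definition gauss_expect :: "(real \<Rightarrow> real) \<Rightarrow> real" where
  "gauss_expect f = integral\<^sup>L (density lborel std_normal_density) f"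

definition I_gauss :: "nat \<Rightarrow> nat \<Rightarrow> real" where
  "I_gauss a b = gauss_expect (\<lambda>g. (g\<^sup>2 - 1) ^ a * g ^ (2 * b))"

fun dfact :: "nat \<Rightarrow> nat" where
  "dfact 0 = 1"
| "dfact (Suc 0) = 1"
| "dfact (Suc (Suc n)) = Suc (Suc n) * dfact n"

end

theory Submission
  imports Defs
begin

text \<open>Since g^2 = (g^2 - 1) + 1, linearity of the expectation gives
  I(a+1,b) = I(a,b+1) - I(a,b); together with the moment recursion I(0,k+1) = (2k+1) I(0,k)
  this determines every I(a,b), and both recursions of part (i) follow by induction on a
  (they are the algebraic trace of Gaussian integration by parts E[g f(g)] = E[f'(g)]).
  For part (ii), multiply the recursion by 2^a: the two terms carry the coefficients 4a
  and 2b-1, whose sum dominates the factor 2(a+b)-1 by which the moment E[g^(2(a+b))] grows,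
  so the inequality propagates by induction. Where the second term is I(a,0) only its
  nonnegativity is needed, which the recursion for b = 0 provides.\<close>

lemma gauss_expect_even_power:
  "gauss_expect (\<lambda>g. g ^ (2 * k)) = fact (2 * k) / (2 ^ k * fact k)"
  unfolding gauss_expect_def
  by (subst integral_density) (auto simp: integral_std_normal_moment_even)

lemma integrable_std_normal_distribution_power:
  "integrable std_normal_distribution (\<lambda>g. g ^ k)"
  by (subst integrable_density) (auto simp: integrable_std_normal_moment)

lemma integrable_I_gauss:
  "integrable std_normal_distribution (\<lambda>g. (g\<^sup>2 - 1) ^ a * g ^ (2 * b))"
proof (induction a arbitrary: b)
  case 0
  show ?case using integrable_std_normal_distribution_power by simp
next
  case (Suc a)
  have "integrable std_normal_distribution
      (\<lambda>g. (g\<^sup>2 - 1) ^ a * g ^ (2 * Suc b) - (g\<^sup>2 - 1) ^ a * g ^ (2 * b))"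
    by (intro Bochner_Integration.integrable_diff Suc.IH)
  then show ?case by (simp add: algebra_simps power2_eq_square)
qed

lemma I_gauss_Suc_left: "I_gauss (Suc a) b = I_gauss a (Suc b) - I_gauss a b"
proof -
  have "I_gauss a (Suc b) - I_gauss a b = integral\<^sup>L std_normal_distribution
      (\<lambda>g. (g\<^sup>2 - 1) ^ a * g ^ (2 * Suc b) - (g\<^sup>2 - 1) ^ a * g ^ (2 * b))"
    unfolding I_gauss_def gauss_expect_def
    by (rule Bochner_Integration.integral_diff[symmetric, OF integrable_I_gauss integrable_I_gauss])
  also have "\<dots> = I_gauss (Suc a) b"
    unfolding I_gauss_def gauss_expect_def
    by (rule Bochner_Integration.integral_cong) (auto simp: algebra_simps power2_eq_square)
  finally show ?thesis by simp
qed

lemma I_gauss_0_left: "I_gauss 0 k = fact (2 * k) / (2 ^ k * fact k)"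
  using gauss_expect_even_power by (simp add: I_gauss_def)

lemma I_gauss_0_left_nonneg: "I_gauss 0 k \<ge> 0"
  by (simp add: I_gauss_0_left)

lemma I_gauss_0_left_Suc: "I_gauss 0 (Suc k) = (2 * real k + 1) * I_gauss 0 k"
proof -
  have "fact (2 * Suc k) = (2 * real k + 2) * ((2 * real k + 1) * fact (2 * k))"
    by (simp add: algebra_simps)
  moreover have "2 ^ Suc k * fact (Suc k) = (2 * real k + 2) * (2 ^ k * fact k)"
    by (simp add: algebra_simps)
  ultimately show ?thesis
    by (simp add: I_gauss_0_left del: fact_Suc power_Suc)
qed

lemma dfact_Suc_double: "dfact (2 * Suc b - 1) = (2 * b + 1) * dfact (2 * b - 1)"
  by (cases b) simp_all

lemma I_gauss_0_left_dfact: "I_gauss 0 b = real (dfact (2 * b - 1))"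
proof (induction b)
  case 0
  show ?case by (simp add: I_gauss_0_left)
next
  case (Suc b)
  then show ?case by (simp only: I_gauss_0_left_Suc dfact_Suc_double) (simp add: algebra_simps)
qed

lemma I_gauss_Suc_Suc:
  "I_gauss (Suc a) (Suc b) = 2 * (real a + 1) * I_gauss a (Suc b) + (2 * real b + 1) * I_gauss (Suc a) b"
proof (induction a arbitrary: b)
  case 0
  show ?case
    using I_gauss_Suc_left[of 0 "Suc b"] I_gauss_Suc_left[of 0 b]
      I_gauss_0_left_Suc[of b] I_gauss_0_left_Suc[of "Suc b"]
    by (simp add: algebra_simps)
next
  case (Suc a)
  show ?case
    using Suc.IH[of b] Suc.IH[of "Suc b"]
      I_gauss_Suc_left[of "Suc a" "Suc b"] I_gauss_Suc_left[of "Suc a" b]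
      I_gauss_Suc_left[of a "Suc b"]
    by (simp add: algebra_simps)
qed

lemma I_gauss_Suc_Suc_0:
  "I_gauss (Suc (Suc a)) 0 = 2 * (real a + 1) * (I_gauss (Suc a) 0 + I_gauss a 0)"
  using I_gauss_Suc_left[of "Suc a" 0] I_gauss_Suc_Suc[of a 0] I_gauss_Suc_left[of a 0]
  by (simp add: algebra_simps)

lemma I_gauss_0_right_nonneg: "I_gauss a 0 \<ge> 0"
proof (induction a rule: less_induct)
  case (less a)
  consider "a = 0" | "a = 1" | c where "a = Suc (Suc c)"
    by (metis One_nat_def not0_implies_Suc)
  then show ?case
  proof cases
    case 3
    then show ?thesis using less[of c] less[of "Suc c"] by (simp add: I_gauss_Suc_Suc_0)
  qed (use I_gauss_0_left_nonneg I_gauss_Suc_left[of 0 0] I_gauss_0_left_Suc[of 0] in simp_all)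
qed

lemma moment_le_I_gauss_right_0:
  "I_gauss 0 (Suc (Suc a)) \<le> 2 ^ Suc (Suc a) * I_gauss (Suc (Suc a)) 0"
proof (induction a)
  case 0
  have "I_gauss 2 0 = 2" and "I_gauss 0 2 = 3"
    using I_gauss_Suc_Suc_0[of 0] I_gauss_Suc_left[of 0 0]
      I_gauss_0_left_Suc[of 0] I_gauss_0_left_Suc[of 1]
    by (simp_all add: I_gauss_0_left numeral_eq_Suc)
  then show ?case by (simp add: numeral_eq_Suc)
next
  case (Suc a)
  let ?a = "real a"
  have "I_gauss 0 (Suc (Suc (Suc a))) = (2 * ?a + 5) * I_gauss 0 (Suc (Suc a))"
    by (simp add: I_gauss_0_left_Suc algebra_simps)
  also have "\<dots> \<le> 4 * (?a + 2) * I_gauss 0 (Suc (Suc a))"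
    using I_gauss_0_left_nonneg by (intro mult_right_mono) auto
  also have "\<dots> \<le> 4 * (?a + 2) * (2 ^ Suc (Suc a) * I_gauss (Suc (Suc a)) 0)"
    using Suc.IH by (intro mult_left_mono) auto
  also have "\<dots> \<le> 4 * (?a + 2) * (2 ^ Suc (Suc a) * I_gauss (Suc (Suc a)) 0)
      + 8 * (?a + 2) * (2 ^ Suc a * I_gauss (Suc a) 0)"
    using I_gauss_0_right_nonneg by simp
  also have "\<dots> = 2 ^ Suc (Suc (Suc a)) * I_gauss (Suc (Suc (Suc a))) 0"
    by (simp add: I_gauss_Suc_Suc_0[of "Suc a"] algebra_simps)
  finally show ?case .
qed

lemma moment_le_I_gauss_right_Suc:
  "I_gauss 0 (a + Suc b) \<le> 2 ^ a * I_gauss a (Suc b)"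
proof (induction a arbitrary: b)
  case 0
  show ?case by simp
next
  case (Suc a)
  note IH_left = Suc.IH
  let ?a = "real a"
  show ?case
  proof (induction b)
    case 0
    have "I_gauss 0 (Suc a + 1) = (2 * ?a + 3) * I_gauss 0 (a + 1)"
      by (simp add: I_gauss_0_left_Suc algebra_simps)
    also have "\<dots> \<le> 4 * (?a + 1) * I_gauss 0 (a + 1)"
      using I_gauss_0_left_nonneg by (intro mult_right_mono) auto
    also have "\<dots> \<le> 4 * (?a + 1) * (2 ^ a * I_gauss a 1)"
      using IH_left[of 0] by (intro mult_left_mono) auto
    also have "\<dots> \<le> 4 * (?a + 1) * (2 ^ a * I_gauss a 1) + 2 ^ Suc a * I_gauss (Suc a) 0"
      using I_gauss_0_right_nonneg by simp
    also have "\<dots> = 2 ^ Suc a * I_gauss (Suc a) 1"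
      by (simp add: I_gauss_Suc_Suc[of a 0] algebra_simps)
    finally show ?case by simp
  next
    case (Suc b)
    let ?b = "real b"
    have "I_gauss 0 (Suc a + Suc (Suc b)) = (2 * ?a + 2 * ?b + 5) * I_gauss 0 (a + Suc (Suc b))"
      by (simp add: I_gauss_0_left_Suc algebra_simps)
    also have "\<dots> \<le> (4 * (?a + 1) + (2 * ?b + 3)) * I_gauss 0 (a + Suc (Suc b))"
      using I_gauss_0_left_nonneg by (intro mult_right_mono) auto
    also have "\<dots> \<le> 4 * (?a + 1) * (2 ^ a * I_gauss a (Suc (Suc b)))
        + (2 * ?b + 3) * (2 ^ Suc a * I_gauss (Suc a) (Suc b))"
      using IH_left[of "Suc b"] Suc.IH
      unfolding distrib_right by (intro add_mono mult_left_mono) auto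
    also have "\<dots> = 2 ^ Suc a * I_gauss (Suc a) (Suc (Suc b))"
      by (simp add: I_gauss_Suc_Suc[of a "Suc b"] algebra_simps)
    finally show ?case .
  qed
qed

theorem lemmaC1:
  shows "I_gauss 0 0 = 1 \<and> I_gauss 1 0 = 0
    \<and> (\<forall>b. I_gauss 0 b = real (dfact (2 * b - 1)))
    \<and> (\<forall>a\<ge>2. I_gauss a 0 = 2 * (real a - 1) * (I_gauss (a - 1) 0 + I_gauss (a - 2) 0))
    \<and> (\<forall>a\<ge>1. \<forall>b\<ge>1. I_gauss a b = 2 * real a * I_gauss (a - 1) b + (2 * real b - 1) * I_gauss a (b - 1))
    \<and> (\<forall>a b. (b = 0 \<and> a \<ge> 2) \<or> b \<ge> 1 \<longrightarrow>
         gauss_expect (\<lambda>g. g ^ (2 * a + 2 * b)) \<le> 2 ^ a * I_gauss a b)"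
proof (intro conjI allI impI)
  show "I_gauss 0 0 = 1" by (simp add: I_gauss_0_left)
  show "I_gauss 1 0 = 0"
    using I_gauss_Suc_left[of 0 0] I_gauss_0_left_Suc[of 0] by simp
  show "I_gauss 0 b = real (dfact (2 * b - 1))" for b
    by (rule I_gauss_0_left_dfact)
  show "I_gauss a 0 = 2 * (real a - 1) * (I_gauss (a - 1) 0 + I_gauss (a - 2) 0)" if "a \<ge> 2" for a
  proof -
    obtain c where "a = Suc (Suc c)"
      using \<open>a \<ge> 2\<close> by (metis add_2_eq_Suc le_Suc_ex)
    then show ?thesis using I_gauss_Suc_Suc_0[of c] by simp
  qed
  show "I_gauss a b = 2 * real a * I_gauss (a - 1) b + (2 * real b - 1) * I_gauss a (b - 1)"
    if "a \<ge> 1" "b \<ge> 1" for a b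
  proof -
    obtain c d where "a = Suc c" "b = Suc d"
      using \<open>a \<ge> 1\<close> \<open>b \<ge> 1\<close> by (metis Suc_le_D One_nat_def)
    then show ?thesis using I_gauss_Suc_Suc[of c d] by (simp add: algebra_simps)
  qed
  show "gauss_expect (\<lambda>g. g ^ (2 * a + 2 * b)) \<le> 2 ^ a * I_gauss a b"
    if range: "(b = 0 \<and> a \<ge> 2) \<or> b \<ge> 1" for a b
  proof -
    consider c where "b = 0" "a = Suc (Suc c)" | c where "b = Suc c"
      using range by (cases b) (auto dest!: le_Suc_ex simp: add_2_eq_Suc)
    then have "I_gauss 0 (a + b) \<le> 2 ^ a * I_gauss a b"
      by cases (use moment_le_I_gauss_right_0 moment_le_I_gauss_right_Suc in auto)
    then show ?thesis by (simp add: I_gauss_def distrib_left)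
  qed
qed

end
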